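(* Let $a,b\in\mathbb{R}$, $a<b$, and let $f(t,x,u,z,s)$, $g(t,x,u,z,s)$ be real functions with continuous partial derivatives with respect to $x,u,z,s$. Let $(\tilde{x},\tilde{u})$ be a normal extremizer of $$L[x,u]=\int_a^b f\big(t,x(t),u(t),x(a),x(b)\big)\,dt$$ subject to $x'(t)=g\big(t,x(t),u(t),x(a),x(b)\big)$, where the endpoint condition $x(a)=x_a$ may or may not be imposed and the condition $x(b)=x_b$ may or may not be imposed. Let $H(t,x,u,p,z,s)=f(t,x,u,z,s)+p\,g(t,x,u,z,s)$. Then there exists a function $\tilde{p}$ such that, with all partial derivatives of $H$ evaluated at $\big(t,\tilde{x}(t),\tilde{u}(t),\tilde{p}(t),\tilde{x}(a),\tilde{x}(b)\big)$, for all $t\in[a,b]$: $$\tilde{x}'(t)=H_p,\qquad \tilde{p}'(t)=-H_x,\qquad H_u=0;$$ moreover, $\tilde{p}(a)=-\int_a^b H_z\,dt$ if $x(a)$ is free, and $\tilde{p}(b)=\int_a^b H_s\,dt$ if $x(b)$ is free.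
   Context: An extremizer is a local minimizer or maximizer. It is normal if the Lagrange multiplier rule holds with multiplier $1$ on $f$, i.e. $(\tilde{x},\tilde{u})$ is an extremizer of $\int_a^b\{f+\lambda(g-x')\}dt$ for some multiplier function $\lambda$ (as opposed to the abnormal case where $f$ gets coefficient $0$). $H_x,H_u,H_p,H_z,H_s$ denote partial derivatives of $H$ with respect to its 2nd–6th arguments. *)

theory Defs
  imports "HOL-Analysis.Analysis"
begin

type_synonym fn5 = "real \<Rightarrow> real \<Rightarrow> real \<Rightarrow> real \<Rightarrow> real \<Rightarrow> real"

definition pd_x :: "fn5 \<Rightarrow> fn5" where
  "pd_x f t x u z s = deriv (\<lambda>y. f t y u z s) x"
definition pd_u :: "fn5 \<Rightarrow> fn5" where
  "pd_u f t x u z s = deriv (\<lambda>y. f t x y z s) u"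
definition pd_z :: "fn5 \<Rightarrow> fn5" where
  "pd_z f t x u z s = deriv (\<lambda>y. f t x u y s) z"
definition pd_s :: "fn5 \<Rightarrow> fn5" where
  "pd_s f t x u z s = deriv (\<lambda>y. f t x u z y) s"

definition smooth_data :: "real \<Rightarrow> real \<Rightarrow> fn5 \<Rightarrow> bool" where
  "smooth_data a b f \<longleftrightarrow>
     (\<forall>t\<in>{a..b}. \<forall>x u z s.
        (\<lambda>y. f t y u z s) differentiable (at x) \<and>
        (\<lambda>y. f t x y z s) differentiable (at u) \<and>
        (\<lambda>y. f t x u y s) differentiable (at z) \<and>
        (\<lambda>y. f t x u z y) differentiable (at s)) \<and>
     continuous_on ({a..b} \<times> UNIV) (\<lambda>(t,x,u,z,s). f t x u z s) \<and>
     continuous_on ({a..b} \<times> UNIV) (\<lambda>(t,x,u,z,s). pd_x f t x u z s) \<and>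
     continuous_on ({a..b} \<times> UNIV) (\<lambda>(t,x,u,z,s). pd_u f t x u z s) \<and>
     continuous_on ({a..b} \<times> UNIV) (\<lambda>(t,x,u,z,s). pd_z f t x u z s) \<and>
     continuous_on ({a..b} \<times> UNIV) (\<lambda>(t,x,u,z,s). pd_s f t x u z s)"

definition dx :: "real \<Rightarrow> real \<Rightarrow> (real \<Rightarrow> real) \<Rightarrow> real \<Rightarrow> real" where
  "dx a b x t = vector_derivative x (at t within {a..b})"

definition C1_on :: "real \<Rightarrow> real \<Rightarrow> (real \<Rightarrow> real) \<Rightarrow> bool" where
  "C1_on a b x \<longleftrightarrow> (\<exists>x'. (\<forall>t\<in>{a..b}. (x has_real_derivative x' t) (at t within {a..b}))
                         \<and> continuous_on {a..b} x')"

definition admissible ::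
  "real \<Rightarrow> real \<Rightarrow> bool \<Rightarrow> real \<Rightarrow> bool \<Rightarrow> real \<Rightarrow> (real \<Rightarrow> real) \<Rightarrow> (real \<Rightarrow> real) \<Rightarrow> bool" where
  "admissible a b fixA xa fixB xb x u \<longleftrightarrow>
     C1_on a b x \<and> continuous_on {a..b} u \<and>
     (fixA \<longrightarrow> x a = xa) \<and> (fixB \<longrightarrow> x b = xb)"

definition feasible ::
  "real \<Rightarrow> real \<Rightarrow> fn5 \<Rightarrow> bool \<Rightarrow> real \<Rightarrow> bool \<Rightarrow> real \<Rightarrow> (real \<Rightarrow> real) \<Rightarrow> (real \<Rightarrow> real) \<Rightarrow> bool" where
  "feasible a b g fixA xa fixB xb x u \<longleftrightarrow>
     admissible a b fixA xa fixB xb x u \<and>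
     (\<forall>t\<in>{a..b}. dx a b x t = g t (x t) (u t) (x a) (x b))"

definition near :: "real \<Rightarrow> real \<Rightarrow> real \<Rightarrow> (real \<Rightarrow> real) \<Rightarrow> (real \<Rightarrow> real)
                     \<Rightarrow> (real \<Rightarrow> real) \<Rightarrow> (real \<Rightarrow> real) \<Rightarrow> bool" where
  "near a b e x u x0 u0 \<longleftrightarrow>
     (\<forall>t\<in>{a..b}. \<bar>x t - x0 t\<bar> < e \<and> \<bar>dx a b x t - dx a b x0 t\<bar> < e \<and> \<bar>u t - u0 t\<bar> < e)"

definition local_min where
  "local_min a b P J x0 u0 \<longleftrightarrow> P x0 u0 \<and>
     (\<exists>e>0. \<forall>x u. P x u \<and> near a b e x u x0 u0 \<longrightarrow> J x0 u0 \<le> J x u)"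
definition local_max where
  "local_max a b P J x0 u0 \<longleftrightarrow> P x0 u0 \<and>
     (\<exists>e>0. \<forall>x u. P x u \<and> near a b e x u x0 u0 \<longrightarrow> J x u \<le> J x0 u0)"
definition extremizer where
  "extremizer a b P J x0 u0 \<longleftrightarrow> local_min a b P J x0 u0 \<or> local_max a b P J x0 u0"

definition Lfun :: "real \<Rightarrow> real \<Rightarrow> fn5 \<Rightarrow> (real \<Rightarrow> real) \<Rightarrow> (real \<Rightarrow> real) \<Rightarrow> real" where
  "Lfun a b f x u = integral {a..b} (\<lambda>t. f t (x t) (u t) (x a) (x b))"

definition Laug :: "real \<Rightarrow> real \<Rightarrow> fn5 \<Rightarrow> fn5 \<Rightarrow> (real \<Rightarrow> real)
                     \<Rightarrow> (real \<Rightarrow> real) \<Rightarrow> (real \<Rightarrow> real) \<Rightarrow> real" where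
  "Laug a b f g lam x u = integral {a..b}
     (\<lambda>t. f t (x t) (u t) (x a) (x b) + lam t * (g t (x t) (u t) (x a) (x b) - dx a b x t))"

definition normal_extremizer where
  "normal_extremizer a b f g fixA xa fixB xb x0 u0 \<longleftrightarrow>
     extremizer a b (feasible a b g fixA xa fixB xb) (Lfun a b f) x0 u0 \<and>
     (\<exists>lam. continuous_on {a..b} lam \<and>
        extremizer a b (admissible a b fixA xa fixB xb) (Laug a b f g lam) x0 u0)"

definition Ham :: "fn5 \<Rightarrow> fn5 \<Rightarrow> real \<Rightarrow> real \<Rightarrow> real \<Rightarrow> real \<Rightarrow> real \<Rightarrow> real \<Rightarrow> real" where
  "Ham f g t x u p z s = f t x u z s + p * g t x u z s"

definition H_x where "H_x f g t x u p z s = deriv (\<lambda>y. Ham f g t y u p z s) x"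
definition H_u where "H_u f g t x u p z s = deriv (\<lambda>y. Ham f g t x y p z s) u"
definition H_p where "H_p f g t x u p z s = deriv (\<lambda>y. Ham f g t x u y z s) p"
definition H_z where "H_z f g t x u p z s = deriv (\<lambda>y. Ham f g t x u p y s) z"
definition H_s where "H_s f g t x u p z s = deriv (\<lambda>y. Ham f g t x u p z y) s"

end

theory Submission
  imports Defs
begin

text \<open>
  Normality means that \<open>(x, u)\<close> extremizes the augmented functional
  \<open>\<integral> f + \<lambda> (g - x')\<close> over all admissible pairs, with no differential constraint. Hence its
  first variation vanishes in every direction \<open>(\<eta>, \<nu>)\<close> with \<open>\<eta>\<close> zero at the fixed endpoints:
  \<open>\<integral> H\<^sub>x \<eta> + H\<^sub>u \<nu> + H\<^sub>z \<eta>(a) + H\<^sub>s \<eta>(b) - \<lambda> \<eta>' = 0\<close>, with \<open>p = \<lambda>\<close> in \<open>H\<close>.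
  The direction \<open>\<eta> = 0, \<nu> = H\<^sub>u\<close> gives \<open>H\<^sub>u = 0\<close>; the du Bois-Reymond lemma on directions
  vanishing at both endpoints gives \<open>\<lambda>' = -H\<^sub>x\<close>; integrating \<open>\<lambda> \<eta>'\<close> by parts and taking
  \<open>\<eta>\<close> affine and vanishing only at the other endpoint gives the transversality conditions.
  Finally \<open>x' = H\<^sub>p\<close> is the constraint \<open>x' = g\<close> itself, so \<open>p = \<lambda>\<close> is the required costate.
\<close>

section \<open>Calculus with the smooth data\<close>

lemma has_derivative_pair_of_real_partial:
  fixes F :: "'a::real_normed_vector \<Rightarrow> real \<Rightarrow> real"
  assumes Fw: "((\<lambda>w. F w y) has_derivative Fw) (at w)"
    and Fy: "\<And>w y. ((\<lambda>y. F w y) has_real_derivative Dy w y) (at y)"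
    and Dy_cont: "isCont (\<lambda>(w, y). Dy w y) (w, y)"
  shows "((\<lambda>(w, y). F w y) has_derivative (\<lambda>(hw, hy). Fw hw + Dy w y * hy)) (at (w, y))"
proof -
  have "continuous (at (w, y) within UNIV \<times> UNIV) (\<lambda>(w, y). blinfun_mult_right (Dy w y))"
    using bounded_linear.continuous[OF bounded_linear_blinfun_mult_right Dy_cont]
    by (simp add: split_beta')
  then have "((\<lambda>(w, y). F w y) has_derivative
      (\<lambda>(hw, hy). Fw hw + blinfun_mult_right (Dy w y) hy)) (at (w, y) within UNIV \<times> UNIV)"
    using Fw Fy by (intro has_derivative_partialsI) (auto simp: has_field_derivative_def)
  then show ?thesis by simp
qed

text \<open>The variables are adjoined one at a time in the order \<open>z, s, u, x\<close> (hence the nested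
  tuple); the partial in the first one, \<open>z\<close>, need not be continuous.\<close>

lemma has_derivative_of_continuous_partials4:
  fixes \<phi> :: "real \<Rightarrow> real \<Rightarrow> real \<Rightarrow> real \<Rightarrow> real"
  assumes dx: "\<And>x u z s. ((\<lambda>y. \<phi> y u z s) has_real_derivative Px x u z s) (at x)"
    and du: "\<And>x u z s. ((\<lambda>y. \<phi> x y z s) has_real_derivative Pu x u z s) (at u)"
    and dz: "\<And>x u z s. ((\<lambda>y. \<phi> x u y s) has_real_derivative Pz x u z s) (at z)"
    and ds: "\<And>x u z s. ((\<lambda>y. \<phi> x u z y) has_real_derivative Ps x u z s) (at s)"
    and cx: "continuous_on UNIV (\<lambda>(x, u, z, s). Px x u z s)"
    and cu: "continuous_on UNIV (\<lambda>(x, u, z, s). Pu x u z s)"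
    and cs: "continuous_on UNIV (\<lambda>(x, u, z, s). Ps x u z s)"
  shows "((\<lambda>(((z, s), u), x). \<phi> x u z s) has_derivative
     (\<lambda>(((hz, hs), hu), hx). Px x u z s * hx + Pu x u z s * hu + Pz x u z s * hz + Ps x u z s * hs))
     (at (((z, s), u), x))"
proof -
  have cont: "isCont (\<lambda>q. P (k q)) q"
    if "continuous_on UNIV P" "continuous_on UNIV k" for P :: "real \<times> real \<times> real \<times> real \<Rightarrow> real"
      and k :: "'a::t2_space \<Rightarrow> _" and q
    using continuous_on_compose[OF that(2) continuous_on_subset[OF that(1)]]
    by (simp add: continuous_on_eq_continuous_at o_def)
  have "isCont (\<lambda>q. (\<lambda>(x, u, z, s). Ps x u z s) ((\<lambda>(z, s). (x, u, z, s)) q)) (z, s)"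
    for x u z s by (rule cont[OF cs]) (auto intro!: continuous_intros simp: split_beta')
  then have zs: "((\<lambda>(z, s). \<phi> x u z s) has_derivative
      (\<lambda>(hz, hs). Pz x u z s * hz + Ps x u z s * hs)) (at (z, s))" for x u z s
    using dz ds by (intro has_derivative_pair_of_real_partial)
      (auto simp: has_field_derivative_def split_beta')
  have "isCont (\<lambda>q. (\<lambda>(x, u, z, s). Pu x u z s) ((\<lambda>(w, u). (x, u, fst w, snd w)) q)) (w, u)"
    for x u w by (rule cont[OF cu]) (auto intro!: continuous_intros simp: split_beta')
  then have zsu: "((\<lambda>(w, u). \<phi> x u (fst w) (snd w)) has_derivative
      (\<lambda>(hw, hu). Pz x u (fst w) (snd w) * fst hw + Ps x u (fst w) (snd w) * snd hw
        + Pu x u (fst w) (snd w) * hu)) (at (w, u))" for x u w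
    using has_derivative_pair_of_real_partial[of "\<lambda>w u. \<phi> x u (fst w) (snd w)", OF _ du]
      zs[of x u "fst w" "snd w"]
    by (simp add: split_beta')
  have "isCont (\<lambda>q. (\<lambda>(x, u, z, s). Px x u z s) ((\<lambda>(v, x). (x, snd v, fst (fst v), snd (fst v))) q))
      (((z, s), u), x)" by (rule cont[OF cx]) (auto intro!: continuous_intros simp: split_beta')
  then have Px_cont: "isCont (\<lambda>(v, x). Px x (snd v) (fst (fst v)) (snd (fst v))) (((z, s), u), x)"
    by (simp add: split_beta')
  have "((\<lambda>v. \<phi> x (snd v) (fst (fst v)) (snd (fst v))) has_derivative
      (\<lambda>hv. Pz x u z s * fst (fst hv) + Ps x u z s * snd (fst hv) + Pu x u z s * snd hv))
      (at ((z, s), u))"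
    using zsu[of x u "(z, s)"] by (simp add: split_beta')
  from has_derivative_pair_of_real_partial[OF this dx Px_cont] show ?thesis
    by (simp add: split_beta' algebra_simps)
qed

lemma smooth_data_continuous_on:
  assumes "smooth_data a b f"
  shows "continuous_on ({a..b} \<times> UNIV) (\<lambda>(t, x, u, z, s). f t x u z s)"
    and "continuous_on ({a..b} \<times> UNIV) (\<lambda>(t, x, u, z, s). pd_x f t x u z s)"
    and "continuous_on ({a..b} \<times> UNIV) (\<lambda>(t, x, u, z, s). pd_u f t x u z s)"
    and "continuous_on ({a..b} \<times> UNIV) (\<lambda>(t, x, u, z, s). pd_z f t x u z s)"
    and "continuous_on ({a..b} \<times> UNIV) (\<lambda>(t, x, u, z, s). pd_s f t x u z s)"
  using assms unfolding smooth_data_def by blast+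

lemma smooth_data_line_has_real_derivative:
  assumes sd: "smooth_data a b f" and t: "t \<in> {a..b}"
  shows "((\<lambda>e. f t (x + e*hx) (u + e*hu) (z + e*hz) (s + e*hs)) has_real_derivative
     pd_x f t (x + e*hx) (u + e*hu) (z + e*hz) (s + e*hs) * hx
    + pd_u f t (x + e*hx) (u + e*hu) (z + e*hz) (s + e*hs) * hu
    + pd_z f t (x + e*hx) (u + e*hu) (z + e*hz) (s + e*hs) * hz
    + pd_s f t (x + e*hx) (u + e*hu) (z + e*hz) (s + e*hs) * hs) (at e)"
proof -
  have slice: "continuous_on UNIV (\<lambda>(x, u, z, s). P t x u z s)"
    if "continuous_on ({a..b} \<times> UNIV) (\<lambda>(t, x, u, z, s). P t x u z s)" for P
  proof -
    have "continuous_on UNIV (\<lambda>q. (\<lambda>(t, x, u, z, s). P t x u z s) (t, q))"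
      by (rule continuous_on_compose2[OF that]) (use t in \<open>auto intro!: continuous_intros\<close>)
    then show ?thesis by (simp add: split_beta')
  qed
  have diff: "(\<lambda>y. f t y u z s) differentiable (at x) \<and> (\<lambda>y. f t x y z s) differentiable (at u) \<and>
      (\<lambda>y. f t x u y s) differentiable (at z) \<and> (\<lambda>y. f t x u z y) differentiable (at s)" for x u z s
    using sd t unfolding smooth_data_def by blast
  have "((\<lambda>(((z, s), u), x). f t x u z s) has_derivative
     (\<lambda>(((hz, hs), hu), hx). pd_x f t x u z s * hx + pd_u f t x u z s * hu + pd_z f t x u z s * hz
        + pd_s f t x u z s * hs)) (at (((z, s), u), x))" for x u z s
  proof (rule has_derivative_of_continuous_partials4)
    show "((\<lambda>y. f t y u z s) has_real_derivative pd_x f t x u z s) (at x)"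
      and "((\<lambda>y. f t x y z s) has_real_derivative pd_u f t x u z s) (at u)"
      and "((\<lambda>y. f t x u y s) has_real_derivative pd_z f t x u z s) (at z)"
      and "((\<lambda>y. f t x u z y) has_real_derivative pd_s f t x u z s) (at s)" for x u z s
      unfolding pd_x_def pd_u_def pd_z_def pd_s_def
      by (simp_all add: DERIV_deriv_iff_real_differentiable diff)
    show "continuous_on UNIV (\<lambda>(x, u, z, s). pd_x f t x u z s)"
      and "continuous_on UNIV (\<lambda>(x, u, z, s). pd_u f t x u z s)"
      and "continuous_on UNIV (\<lambda>(x, u, z, s). pd_s f t x u z s)"
      using smooth_data_continuous_on[OF sd] by (blast intro: slice)+
  qed
  note D = this[of "x + e*hx" "u + e*hu" "z + e*hz" "s + e*hs"]
  have path: "((\<lambda>e. (((z + e*hz, s + e*hs), u + e*hu), x + e*hx)) has_derivative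
      (\<lambda>h. (((h*hz, h*hs), h*hu), h*hx))) (at e)"
    by (auto intro!: derivative_eq_intros)
  have comp: "(\<lambda>(((z, s), u), x). f t x u z s) \<circ> (\<lambda>e. (((z + e*hz, s + e*hs), u + e*hu), x + e*hx))
      = (\<lambda>e. f t (x + e*hx) (u + e*hu) (z + e*hz) (s + e*hs))"
    by (simp add: fun_eq_iff)
  from diff_chain_at[OF path D, unfolded comp] show ?thesis
    unfolding has_field_derivative_def
    by (rule has_derivative_eq_rhs) (simp add: fun_eq_iff algebra_simps)
qed

lemma continuous_on_compose5:
  assumes P: "continuous_on ({a..b} \<times> UNIV) (\<lambda>(t, x, u, z, s). P t x u z s)"
    and "continuous_on S T" "continuous_on S A" "continuous_on S B" "continuous_on S C"
      "continuous_on S D"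
    and "T ` S \<subseteq> {a..b}"
  shows "continuous_on S (\<lambda>q. P (T q) (A q) (B q) (C q) (D q))"
proof -
  have "continuous_on S (\<lambda>q. (\<lambda>(t, x, u, z, s). P t x u z s) (T q, A q, B q, C q, D q))"
    by (rule continuous_on_compose2[OF P]) (use assms in \<open>auto intro!: continuous_intros\<close>)
  then show ?thesis by simp
qed

lemma continuous_on_compose_snd:
  "continuous_on {a..b} h \<Longrightarrow> continuous_on (S \<times> {a..b}) (\<lambda>q. h (snd q))"
  by (rule continuous_on_compose2[of "{a..b}"]) (auto intro!: continuous_intros)

section \<open>The Hamiltonian\<close>

lemma deriv_add_cmult:
  fixes \<phi> \<psi> :: "real \<Rightarrow> real"
  assumes "\<phi> differentiable (at x)" "\<psi> differentiable (at x)"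
  shows "deriv (\<lambda>y. \<phi> y + p * \<psi> y) x = deriv \<phi> x + p * deriv \<psi> x"
  using assms unfolding DERIV_deriv_iff_real_differentiable[symmetric]
  by (intro DERIV_imp_deriv DERIV_add DERIV_cmult)

lemma H_partials_eq:
  assumes sf: "smooth_data a b f" and sg: "smooth_data a b g" and t: "t \<in> {a..b}"
  shows "H_x f g t x u p z s = pd_x f t x u z s + p * pd_x g t x u z s"
    and "H_u f g t x u p z s = pd_u f t x u z s + p * pd_u g t x u z s"
    and "H_z f g t x u p z s = pd_z f t x u z s + p * pd_z g t x u z s"
    and "H_s f g t x u p z s = pd_s f t x u z s + p * pd_s g t x u z s"
    and "H_p f g t x u p z s = g t x u z s"
proof -
  note diff = sf[unfolded smooth_data_def] sg[unfolded smooth_data_def]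
  show "H_x f g t x u p z s = pd_x f t x u z s + p * pd_x g t x u z s"
    unfolding H_x_def Ham_def pd_x_def using diff t by (intro deriv_add_cmult) blast+
  show "H_u f g t x u p z s = pd_u f t x u z s + p * pd_u g t x u z s"
    unfolding H_u_def Ham_def pd_u_def using diff t by (intro deriv_add_cmult) blast+
  show "H_z f g t x u p z s = pd_z f t x u z s + p * pd_z g t x u z s"
    unfolding H_z_def Ham_def pd_z_def using diff t by (intro deriv_add_cmult) blast+
  show "H_s f g t x u p z s = pd_s f t x u z s + p * pd_s g t x u z s"
    unfolding H_s_def Ham_def pd_s_def using diff t by (intro deriv_add_cmult) blast+
  show "H_p f g t x u p z s = g t x u z s"
    unfolding H_p_def Ham_def by (rule DERIV_imp_deriv) (auto intro!: derivative_eq_intros)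
qed

lemma continuous_on_H_partials:
  assumes sf: "smooth_data a b f" and sg: "smooth_data a b g"
    and X: "continuous_on {a..b} X" and U: "continuous_on {a..b} U" and p: "continuous_on {a..b} p"
  shows "continuous_on {a..b} (\<lambda>t. H_x f g t (X t) (U t) (p t) (X a) (X b))"
    and "continuous_on {a..b} (\<lambda>t. H_u f g t (X t) (U t) (p t) (X a) (X b))"
    and "continuous_on {a..b} (\<lambda>t. H_z f g t (X t) (U t) (p t) (X a) (X b))"
    and "continuous_on {a..b} (\<lambda>t. H_s f g t (X t) (U t) (p t) (X a) (X b))"
proof -
  have along: "continuous_on {a..b} (\<lambda>t. P t (X t) (U t) (X a) (X b))"
    if "continuous_on ({a..b} \<times> UNIV) (\<lambda>(t, x, u, z, s). P t x u z s)" for P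
    by (rule continuous_on_compose5[OF that]) (auto intro!: continuous_intros X U)
  have pd: "continuous_on {a..b} (\<lambda>t. pd_x h t (X t) (U t) (X a) (X b))"
    "continuous_on {a..b} (\<lambda>t. pd_u h t (X t) (U t) (X a) (X b))"
    "continuous_on {a..b} (\<lambda>t. pd_z h t (X t) (U t) (X a) (X b))"
    "continuous_on {a..b} (\<lambda>t. pd_s h t (X t) (U t) (X a) (X b))"
    if "smooth_data a b h" for h
    using smooth_data_continuous_on[OF that] by (blast intro: along)+
  show "continuous_on {a..b} (\<lambda>t. H_x f g t (X t) (U t) (p t) (X a) (X b))"
    by (subst continuous_on_cong[OF refl H_partials_eq(1)[OF sf sg]])
      (auto intro!: continuous_intros pd sf sg p)
  show "continuous_on {a..b} (\<lambda>t. H_u f g t (X t) (U t) (p t) (X a) (X b))"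
    by (subst continuous_on_cong[OF refl H_partials_eq(2)[OF sf sg]])
      (auto intro!: continuous_intros pd sf sg p)
  show "continuous_on {a..b} (\<lambda>t. H_z f g t (X t) (U t) (p t) (X a) (X b))"
    by (subst continuous_on_cong[OF refl H_partials_eq(3)[OF sf sg]])
      (auto intro!: continuous_intros pd sf sg p)
  show "continuous_on {a..b} (\<lambda>t. H_s f g t (X t) (U t) (p t) (X a) (X b))"
    by (subst continuous_on_cong[OF refl H_partials_eq(4)[OF sf sg]])
      (auto intro!: continuous_intros pd sf sg p)
qed

section \<open>Consequences of a vanishing first variation\<close>

lemma continuous_square_has_integral_0_imp_0:
  fixes h :: "real \<Rightarrow> real"
  assumes "a < b" "continuous_on {a..b} h" "((\<lambda>t. h t * h t) has_integral 0) {a..b}"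
    and "t \<in> {a..b}"
  shows "h t = 0"
  using has_integral_0_cbox_imp_0[of a b "\<lambda>t. h t * h t" t] assms
  by (auto simp: cbox_interval intro!: continuous_intros)

lemma has_integral_product_derivative:
  fixes u v u' v' :: "real \<Rightarrow> real"
  assumes "a \<le> b"
    and ud: "\<forall>t\<in>{a..b}. (u has_real_derivative u' t) (at t within {a..b})"
    and vd: "\<forall>t\<in>{a..b}. (v has_real_derivative v' t) (at t within {a..b})"
  shows "((\<lambda>t. u' t * v t + u t * v' t) has_integral (u b * v b - u a * v a)) {a..b}"
proof (rule fundamental_theorem_of_calculus[OF \<open>a \<le> b\<close>])
  fix t assume "t \<in> {a..b}"
  with ud vd show "((\<lambda>t. u t * v t) has_vector_derivative u' t * v t + u t * v' t) (at t within {a..b})"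
    unfolding has_real_derivative_iff_has_vector_derivative[symmetric]
    by (auto intro!: derivative_eq_intros)
qed

text \<open>With \<open>A\<close> a primitive of \<open>F\<close> and \<open>C\<close> the mean of \<open>A + \<lambda>\<close>, the test function
  \<open>\<eta> = \<integral>\<^sub>a (A + \<lambda> - C)\<close> turns the hypothesis into \<open>\<integral> (A + \<lambda> - C)\<^sup>2 = 0\<close>.\<close>

lemma du_bois_reymond:
  fixes F lam :: "real \<Rightarrow> real"
  assumes ab: "a < b" and Fc: "continuous_on {a..b} F" and lamc: "continuous_on {a..b} lam"
    and vanish: "\<And>eta eta'. \<forall>t\<in>{a..b}. (eta has_real_derivative eta' t) (at t within {a..b}) \<Longrightarrow>
      continuous_on {a..b} eta' \<Longrightarrow> eta a = 0 \<Longrightarrow> eta b = 0 \<Longrightarrow>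
      ((\<lambda>t. F t * eta t - lam t * eta' t) has_integral 0) {a..b}"
  shows "\<forall>t\<in>{a..b}. (lam has_real_derivative - F t) (at t within {a..b})"
proof -
  define A where "A t = integral {a..t} F" for t
  have Ad: "\<forall>t\<in>{a..b}. (A has_real_derivative F t) (at t within {a..b})"
    unfolding A_def using integral_has_real_derivative[OF Fc] by blast
  have Ac: "continuous_on {a..b} A"
    using Ad by (blast intro: DERIV_continuous_on)
  define C where "C = integral {a..b} (\<lambda>t. A t + lam t) / (b - a)"
  define w where "w t = A t + lam t - C" for t
  have wc: "continuous_on {a..b} w" unfolding w_def by (intro continuous_intros Ac lamc)
  have w0: "(w has_integral 0) {a..b}"
  proof -
    have "((\<lambda>t. A t + lam t) has_integral integral {a..b} (\<lambda>t. A t + lam t)) {a..b}"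
      by (intro integrable_integral integrable_continuous_interval continuous_intros Ac lamc)
    from has_integral_diff[OF this has_integral_const_real[of C a b]] show ?thesis
      using ab by (simp add: w_def[abs_def] C_def)
  qed
  define eta where "eta t = integral {a..t} w" for t
  have ed: "\<forall>t\<in>{a..b}. (eta has_real_derivative w t) (at t within {a..b})"
    unfolding eta_def using integral_has_real_derivative[OF wc] by blast
  have eta_a: "eta a = 0" and eta_b: "eta b = 0"
    using w0 by (simp_all add: eta_def integral_unique)
  have by_test: "((\<lambda>t. F t * eta t - lam t * w t) has_integral 0) {a..b}"
    by (rule vanish[OF ed wc eta_a eta_b])
  have by_parts: "((\<lambda>t. F t * eta t + A t * w t) has_integral 0) {a..b}"
    using has_integral_product_derivative[OF less_imp_le[OF ab] Ad ed] by (simp add: eta_a eta_b)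
  have "((\<lambda>t. (F t * eta t + A t * w t) - (F t * eta t - lam t * w t) - C * w t)
      has_integral 0 - 0 - C * 0) {a..b}"
    by (intro has_integral_diff has_integral_mult_right by_parts by_test w0)
  then have "((\<lambda>t. w t * w t) has_integral 0) {a..b}"
    by (simp add: w_def algebra_simps)
  then have w_zero: "w t = 0" if "t \<in> {a..b}" for t
    using continuous_square_has_integral_0_imp_0[OF ab wc _ that] by blast
  show ?thesis
  proof
    fix t assume t: "t \<in> {a..b}"
    have "((\<lambda>t. C - A t) has_real_derivative - F t) (at t within {a..b})"
      using Ad t by (auto intro!: derivative_eq_intros)
    then show "(lam has_real_derivative - F t) (at t within {a..b})"
      by (rule has_field_derivative_transform_within[OF _ zero_less_one t])
         (use w_zero in \<open>auto simp: w_def algebra_simps\<close>)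
  qed
qed

lemma first_variation_vanishing_imp_costate:
  fixes Fx Fu Fz Fs lam :: "real \<Rightarrow> real"
  assumes ab: "a < b"
    and Fxc: "continuous_on {a..b} Fx" and Fuc: "continuous_on {a..b} Fu"
    and Fzc: "continuous_on {a..b} Fz" and Fsc: "continuous_on {a..b} Fs"
    and lamc: "continuous_on {a..b} lam"
    and FV: "\<And>eta eta' nu. \<forall>t\<in>{a..b}. (eta has_real_derivative eta' t) (at t within {a..b}) \<Longrightarrow>
      continuous_on {a..b} eta' \<Longrightarrow> continuous_on {a..b} nu \<Longrightarrow>
      (fixA \<Longrightarrow> eta a = 0) \<Longrightarrow> (fixB \<Longrightarrow> eta b = 0) \<Longrightarrow>
      ((\<lambda>t. Fx t * eta t + Fu t * nu t + Fz t * eta a + Fs t * eta b - lam t * eta' t)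
        has_integral 0) {a..b}"
  shows "\<forall>t\<in>{a..b}. Fu t = 0 \<and> (lam has_real_derivative - Fx t) (at t within {a..b})"
    and "\<not> fixA \<Longrightarrow> lam a = - integral {a..b} Fz"
    and "\<not> fixB \<Longrightarrow> lam b = integral {a..b} Fs"
proof -
  have "((\<lambda>t. Fu t * Fu t) has_integral 0) {a..b}"
    using FV[of "\<lambda>t. 0" "\<lambda>t. 0" Fu] Fuc by simp
  then have Fu0: "Fu t = 0" if "t \<in> {a..b}" for t
    using continuous_square_has_integral_0_imp_0[OF ab Fuc _ that] by blast
  have lamd: "\<forall>t\<in>{a..b}. (lam has_real_derivative - Fx t) (at t within {a..b})"
  proof (rule du_bois_reymond[OF ab Fxc lamc])
    fix eta eta' assume "\<forall>t\<in>{a..b}. (eta has_real_derivative eta' t) (at t within {a..b})"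
      "continuous_on {a..b} eta'" "eta a = 0" "eta b = 0"
    then have "((\<lambda>t. Fx t * eta t + Fu t * 0 + Fz t * eta a + Fs t * eta b - lam t * eta' t)
        has_integral 0) {a..b}"
      by (intro FV) auto
    then show "((\<lambda>t. Fx t * eta t - lam t * eta' t) has_integral 0) {a..b}"
      by (simp add: \<open>eta a = 0\<close> \<open>eta b = 0\<close>)
  qed
  then show "\<forall>t\<in>{a..b}. Fu t = 0 \<and> (lam has_real_derivative - Fx t) (at t within {a..b})"
    using Fu0 by blast
  have transversality: "lam a * eta a - lam b * eta b + eta a * integral {a..b} Fz
      + eta b * integral {a..b} Fs = 0"
    if ed: "\<forall>t\<in>{a..b}. (eta has_real_derivative eta' t) (at t within {a..b})"
      and "continuous_on {a..b} eta'"
      and "fixA \<Longrightarrow> eta a = 0" "fixB \<Longrightarrow> eta b = 0" for eta eta'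
  proof -
    have "((\<lambda>t. Fx t * eta t + Fu t * 0 + Fz t * eta a + Fs t * eta b - lam t * eta' t)
        has_integral 0) {a..b}"
      using that by (intro FV) auto
    moreover have "((\<lambda>t. Fz t * eta a + Fs t * eta b - (- Fx t * eta t + lam t * eta' t)) has_integral
        integral {a..b} Fz * eta a + integral {a..b} Fs * eta b - (lam b * eta b - lam a * eta a)) {a..b}"
      by (intro has_integral_diff has_integral_add has_integral_mult_left integrable_integral
          integrable_continuous_interval Fzc Fsc has_integral_product_derivative[OF _ lamd ed])
        (use ab in simp)
    ultimately show ?thesis
      by (force simp: algebra_simps dest: has_integral_unique)
  qed
  have affine: "\<forall>t\<in>{a..b}. ((\<lambda>t. (t - c) / (b - a)) has_real_derivative 1 / (b - a)) (at t within {a..b})"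
    for c using ab by (auto intro!: derivative_eq_intros)
  have unit: "(a - b) / (b - a) = -1" "(b - a) / (b - a) = 1"
    using ab by (simp_all add: divide_eq_eq)
  show "lam a = - integral {a..b} Fz" if "\<not> fixA"
    using transversality[OF affine[of b]] unit that by simp
  show "lam b = integral {a..b} Fs" if "\<not> fixB"
    using transversality[OF affine[of a]] unit that by simp
qed

section \<open>First variation of the augmented functional\<close>

lemma dx_eqI:
  assumes "a < b" "t \<in> {a..b}" "(h has_real_derivative h') (at t within {a..b})"
  shows "dx a b h t = h'"
  using vector_derivative_within_cbox[of a b t h h'] assms
  unfolding dx_def has_real_derivative_iff_has_vector_derivative by (simp add: cbox_interval)

lemma Laug_variation_has_real_derivative:
  fixes X X' U eta eta' nu lam :: "real \<Rightarrow> real"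
  assumes ab: "a < b" and sf: "smooth_data a b f" and sg: "smooth_data a b g"
    and lamc: "continuous_on {a..b} lam"
    and Xd: "\<forall>t\<in>{a..b}. (X has_real_derivative X' t) (at t within {a..b})"
    and X'c: "continuous_on {a..b} X'"
    and Uc: "continuous_on {a..b} U"
    and ed: "\<forall>t\<in>{a..b}. (eta has_real_derivative eta' t) (at t within {a..b})"
    and e'c: "continuous_on {a..b} eta'"
    and nuc: "continuous_on {a..b} nu"
  shows "((\<lambda>e. Laug a b f g lam (\<lambda>t. X t + e * eta t) (\<lambda>t. U t + e * nu t)) has_real_derivative
    integral {a..b} (\<lambda>t. H_x f g t (X t) (U t) (lam t) (X a) (X b) * eta t
      + H_u f g t (X t) (U t) (lam t) (X a) (X b) * nu t
      + H_z f g t (X t) (U t) (lam t) (X a) (X b) * eta a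
      + H_s f g t (X t) (U t) (lam t) (X a) (X b) * eta b - lam t * eta' t)) (at 0)"
proof -
  have Xc: "continuous_on {a..b} X" and ec: "continuous_on {a..b} eta"
    using Xd ed by (blast intro: DERIV_continuous_on)+
  note fc = smooth_data_continuous_on[OF sf] and gc = smooth_data_continuous_on[OF sg]
  define Phi where "Phi e t = f t (X t + e*eta t) (U t + e*nu t) (X a + e*eta a) (X b + e*eta b)
     + lam t * (g t (X t + e*eta t) (U t + e*nu t) (X a + e*eta a) (X b + e*eta b) - (X' t + e*eta' t))"
    for e t
  define Fd where "Fd h e t = pd_x h t (X t + e*eta t) (U t + e*nu t) (X a + e*eta a) (X b + e*eta b) * eta t
     + pd_u h t (X t + e*eta t) (U t + e*nu t) (X a + e*eta a) (X b + e*eta b) * nu t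
     + pd_z h t (X t + e*eta t) (U t + e*nu t) (X a + e*eta a) (X b + e*eta b) * eta a
     + pd_s h t (X t + e*eta t) (U t + e*nu t) (X a + e*eta a) (X b + e*eta b) * eta b" for h e t
  define Dv where "Dv e t = Fd f e t + lam t * (Fd g e t - eta' t)" for e t
  have "dx a b (\<lambda>t. X t + e*eta t) t = X' t + e*eta' t" if "t \<in> {a..b}" for e t
    by (rule dx_eqI[OF ab that])
       (use Xd ed that in \<open>auto intro!: derivative_eq_intros\<close>)
  then have Laug_eq: "Laug a b f g lam (\<lambda>t. X t + e*eta t) (\<lambda>t. U t + e*nu t) = integral {a..b} (Phi e)"
    for e unfolding Laug_def Phi_def by (intro integral_cong) simp
  have along: "continuous_on (UNIV \<times> {a..b}) (\<lambda>q. P (snd q) (X (snd q) + fst q * eta (snd q))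
      (U (snd q) + fst q * nu (snd q)) (X a + fst q * eta a) (X b + fst q * eta b))"
    if "continuous_on ({a..b} \<times> UNIV) (\<lambda>(t, x, u, z, s). P t x u z s)" for P
    by (rule continuous_on_compose5[OF that])
       (auto intro!: continuous_intros continuous_on_compose_snd Xc ec Uc nuc)
  have along_fixed: "continuous_on {a..b} (\<lambda>t. P t (X t + e * eta t) (U t + e * nu t)
      (X a + e * eta a) (X b + e * eta b))"
    if "continuous_on ({a..b} \<times> UNIV) (\<lambda>(t, x, u, z, s). P t x u z s)" for P e
    by (rule continuous_on_compose5[OF that, where T="\<lambda>t. t"])
       (auto intro!: continuous_intros Xc ec Uc nuc)
  have "((\<lambda>e. integral (cbox a b) (Phi e)) has_field_derivative integral (cbox a b) (Dv 0))
      (at 0 within UNIV)"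
  proof (rule leibniz_rule_field_derivative)
    show "((\<lambda>e. Phi e t) has_field_derivative Dv e t) (at e within UNIV)"
      if "t \<in> cbox a b" for e t
    proof -
      have t: "t \<in> {a..b}" using that by (simp add: cbox_interval)
      note line = smooth_data_line_has_real_derivative[OF _ t, where x="X t" and hx="eta t"
          and u="U t" and hu="nu t" and z="X a" and hz="eta a" and s="X b" and hs="eta b" and e=e]
      show ?thesis
        unfolding Phi_def Dv_def Fd_def using line[OF sf] line[OF sg]
        by (auto intro!: derivative_eq_intros simp: algebra_simps)
    qed
    show "Phi e integrable_on cbox a b" for e
      unfolding Phi_def cbox_interval
      by (intro integrable_continuous_interval continuous_intros lamc X'c e'c
          along_fixed[OF fc(1)] along_fixed[OF gc(1)])
    have "continuous_on (UNIV \<times> {a..b}) (\<lambda>q. Dv (fst q) (snd q))"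
      unfolding Dv_def Fd_def
      by (intro continuous_intros continuous_on_compose_snd ec lamc nuc e'c
          along[OF fc(2)] along[OF fc(3)] along[OF fc(4)] along[OF fc(5)]
          along[OF gc(2)] along[OF gc(3)] along[OF gc(4)] along[OF gc(5)])
    then show "continuous_on (UNIV \<times> cbox a b) (\<lambda>(e, t). Dv e t)"
      by (simp add: cbox_interval split_beta')
  qed auto
  moreover have "integral {a..b} (Dv 0) = integral {a..b} (\<lambda>t.
      H_x f g t (X t) (U t) (lam t) (X a) (X b) * eta t
      + H_u f g t (X t) (U t) (lam t) (X a) (X b) * nu t
      + H_z f g t (X t) (U t) (lam t) (X a) (X b) * eta a
      + H_s f g t (X t) (U t) (lam t) (X a) (X b) * eta b - lam t * eta' t)"
    by (intro integral_cong) (simp add: Dv_def Fd_def H_partials_eq[OF sf sg] algebra_simps)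
  ultimately show ?thesis
    by (simp add: Laug_eq cbox_interval)
qed

lemma admissible_near_perturbation:
  fixes eta eta' nu :: "real \<Rightarrow> real"
  assumes ab: "a < b" and adm: "admissible a b fixA xa fixB xb X U"
    and ed: "\<forall>t\<in>{a..b}. (eta has_real_derivative eta' t) (at t within {a..b})"
    and e'c: "continuous_on {a..b} eta'" and nuc: "continuous_on {a..b} nu"
    and fa: "fixA \<Longrightarrow> eta a = 0" and fb: "fixB \<Longrightarrow> eta b = 0"
    and bound: "\<forall>t\<in>{a..b}. \<bar>eta t\<bar> \<le> M \<and> \<bar>eta' t\<bar> \<le> M \<and> \<bar>nu t\<bar> \<le> M"
    and small: "\<bar>y\<bar> * M < e"
  shows "admissible a b fixA xa fixB xb (\<lambda>t. X t + y * eta t) (\<lambda>t. U t + y * nu t)"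
    and "near a b e (\<lambda>t. X t + y * eta t) (\<lambda>t. U t + y * nu t) X U"
proof -
  obtain X' where Xd: "\<forall>t\<in>{a..b}. (X has_real_derivative X' t) (at t within {a..b})"
    and X'c: "continuous_on {a..b} X'"
    using adm unfolding admissible_def C1_on_def by blast
  have Xyd: "\<forall>t\<in>{a..b}. ((\<lambda>t. X t + y * eta t) has_real_derivative X' t + y * eta' t) (at t within {a..b})"
    using Xd ed by (auto intro!: derivative_eq_intros)
  then have "C1_on a b (\<lambda>t. X t + y * eta t)"
    unfolding C1_on_def by (intro exI[of _ "\<lambda>t. X' t + y * eta' t"] conjI continuous_intros X'c e'c)
  then show "admissible a b fixA xa fixB xb (\<lambda>t. X t + y * eta t) (\<lambda>t. U t + y * nu t)"
    using adm fa fb unfolding admissible_def by (auto intro!: continuous_intros nuc)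
  have scaled: "\<bar>y * h\<bar> < e" if "\<bar>h\<bar> \<le> M" for h
  proof -
    have "\<bar>y * h\<bar> \<le> \<bar>y\<bar> * M" unfolding abs_mult by (rule mult_left_mono) (use that in auto)
    then show ?thesis using small by linarith
  qed
  show "near a b e (\<lambda>t. X t + y * eta t) (\<lambda>t. U t + y * nu t) X U"
    unfolding near_def
  proof
    fix t assume t: "t \<in> {a..b}"
    have "dx a b (\<lambda>t. X t + y * eta t) t - dx a b X t = y * eta' t"
      using dx_eqI[OF ab t bspec[OF Xyd t]] dx_eqI[OF ab t bspec[OF Xd t]] by simp
    then show "\<bar>X t + y * eta t - X t\<bar> < e \<and> \<bar>dx a b (\<lambda>t. X t + y * eta t) t - dx a b X t\<bar> < e
        \<and> \<bar>U t + y * nu t - U t\<bar> < e"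
      using scaled bound t by simp
  qed
qed

lemma extremizer_Laug_first_variation:
  fixes eta eta' nu lam :: "real \<Rightarrow> real"
  assumes ab: "a < b" and sf: "smooth_data a b f" and sg: "smooth_data a b g"
    and lamc: "continuous_on {a..b} lam"
    and ext: "extremizer a b (admissible a b fixA xa fixB xb) (Laug a b f g lam) X U"
    and ed: "\<forall>t\<in>{a..b}. (eta has_real_derivative eta' t) (at t within {a..b})"
    and e'c: "continuous_on {a..b} eta'" and nuc: "continuous_on {a..b} nu"
    and fa: "fixA \<Longrightarrow> eta a = 0" and fb: "fixB \<Longrightarrow> eta b = 0"
  shows "((\<lambda>t. H_x f g t (X t) (U t) (lam t) (X a) (X b) * eta t
      + H_u f g t (X t) (U t) (lam t) (X a) (X b) * nu t
      + H_z f g t (X t) (U t) (lam t) (X a) (X b) * eta a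
      + H_s f g t (X t) (U t) (lam t) (X a) (X b) * eta b - lam t * eta' t) has_integral 0) {a..b}"
    (is "(?F has_integral 0) {a..b}")
proof -
  have adm: "admissible a b fixA xa fixB xb X U"
    using ext unfolding extremizer_def local_min_def local_max_def by blast
  then obtain X' where Xd: "\<forall>t\<in>{a..b}. (X has_real_derivative X' t) (at t within {a..b})"
    and X'c: "continuous_on {a..b} X'" and Uc: "continuous_on {a..b} U"
    unfolding admissible_def C1_on_def by blast
  have Xc: "continuous_on {a..b} X" and ec: "continuous_on {a..b} eta"
    using Xd ed by (blast intro: DERIV_continuous_on)+
  define \<phi> where "\<phi> y = Laug a b f g lam (\<lambda>t. X t + y * eta t) (\<lambda>t. U t + y * nu t)" for y
  have D: "(\<phi> has_real_derivative integral {a..b} ?F) (at 0)"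
    unfolding \<phi>_def by (rule Laug_variation_has_real_derivative[OF ab sf sg lamc Xd X'c Uc ed e'c nuc])
  have \<phi>0: "\<phi> 0 = Laug a b f g lam X U" by (simp add: \<phi>_def)
  have "bounded ((\<lambda>t. \<bar>eta t\<bar> + \<bar>eta' t\<bar> + \<bar>nu t\<bar>) ` {a..b})"
    by (intro compact_imp_bounded compact_continuous_image continuous_intros ec e'c nuc) simp
  then obtain M where M: "M > 0" "\<forall>t\<in>{a..b}. \<bar>eta t\<bar> \<le> M \<and> \<bar>eta' t\<bar> \<le> M \<and> \<bar>nu t\<bar> \<le> M"
    unfolding bounded_pos by fastforce
  have near: "admissible a b fixA xa fixB xb (\<lambda>t. X t + y * eta t) (\<lambda>t. U t + y * nu t) \<and>
      near a b e (\<lambda>t. X t + y * eta t) (\<lambda>t. U t + y * nu t) X U" if "\<bar>0 - y\<bar> < e / M" for y e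
    using admissible_near_perturbation[OF ab adm ed e'c nuc fa fb M(2), of y e] that M(1)
    by (simp add: pos_less_divide_eq)
  have "integral {a..b} ?F = 0"
    using ext unfolding extremizer_def
  proof
    assume "local_min a b (admissible a b fixA xa fixB xb) (Laug a b f g lam) X U"
    then obtain e where "e > 0" and "\<forall>y. \<bar>0 - y\<bar> < e / M \<longrightarrow> \<phi> 0 \<le> \<phi> y"
      using near unfolding local_min_def \<phi>0 by (auto simp: \<phi>_def)
    with M(1) show ?thesis by (intro DERIV_local_min[OF D]) simp_all
  next
    assume "local_max a b (admissible a b fixA xa fixB xb) (Laug a b f g lam) X U"
    then obtain e where "e > 0" and "\<forall>y. \<bar>0 - y\<bar> < e / M \<longrightarrow> \<phi> y \<le> \<phi> 0"
      using near unfolding local_max_def \<phi>0 by (auto simp: \<phi>_def)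
    with M(1) show ?thesis by (intro DERIV_local_max[OF D]) simp_all
  qed
  moreover have "?F integrable_on {a..b}"
    using continuous_on_H_partials[OF sf sg Xc Uc lamc]
    by (intro integrable_continuous_interval continuous_intros ec e'c nuc lamc)
  ultimately show ?thesis
    using integrable_integral by fastforce
qed

theorem mainTheorem4:
  fixes a b :: real and f g :: fn5 and fixA fixB :: bool and xa xb :: real
    and xt ut :: "real \<Rightarrow> real"
  assumes "a < b"
    and "smooth_data a b f" and "smooth_data a b g"
    and "normal_extremizer a b f g fixA xa fixB xb xt ut"
  shows "\<exists>p :: real \<Rightarrow> real.
     (\<forall>t\<in>{a..b}.
        dx a b xt t = H_p f g t (xt t) (ut t) (p t) (xt a) (xt b) \<and>
        (p has_real_derivative (- H_x f g t (xt t) (ut t) (p t) (xt a) (xt b))) (at t within {a..b}) \<and>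
        H_u f g t (xt t) (ut t) (p t) (xt a) (xt b) = 0) \<and>
     (\<not> fixA \<longrightarrow> p a = - integral {a..b} (\<lambda>t. H_z f g t (xt t) (ut t) (p t) (xt a) (xt b))) \<and>
     (\<not> fixB \<longrightarrow> p b = integral {a..b} (\<lambda>t. H_s f g t (xt t) (ut t) (p t) (xt a) (xt b)))"
proof -
  note ab = assms(1) and sf = assms(2) and sg = assms(3)
  from assms(4) obtain lam where lamc: "continuous_on {a..b} lam"
    and ext: "extremizer a b (admissible a b fixA xa fixB xb) (Laug a b f g lam) xt ut"
    and ext_constrained: "extremizer a b (feasible a b g fixA xa fixB xb) (Lfun a b f) xt ut"
    unfolding normal_extremizer_def by blast
  have "feasible a b g fixA xa fixB xb xt ut"
    using ext_constrained unfolding extremizer_def local_min_def local_max_def by blast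
  then have "admissible a b fixA xa fixB xb xt ut"
    and dyn: "\<forall>t\<in>{a..b}. dx a b xt t = g t (xt t) (ut t) (xt a) (xt b)"
    unfolding feasible_def by blast+
  then obtain X' where Xd: "\<forall>t\<in>{a..b}. (xt has_real_derivative X' t) (at t within {a..b})"
    and Uc: "continuous_on {a..b} ut"
    unfolding admissible_def C1_on_def by blast
  have Xc: "continuous_on {a..b} xt"
    using Xd by (blast intro: DERIV_continuous_on)
  note costate = first_variation_vanishing_imp_costate[OF ab
      continuous_on_H_partials[OF sf sg Xc Uc lamc] lamc
      extremizer_Laug_first_variation[OF ab sf sg lamc ext]]
  show ?thesis
  proof (intro exI[of _ lam] conjI ballI impI)
    fix t assume t: "t \<in> {a..b}"
    show "dx a b xt t = H_p f g t (xt t) (ut t) (lam t) (xt a) (xt b)"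
      using dyn t by (simp add: H_partials_eq(5)[OF sf sg t])
    show "(lam has_real_derivative - H_x f g t (xt t) (ut t) (lam t) (xt a) (xt b)) (at t within {a..b})"
      and "H_u f g t (xt t) (ut t) (lam t) (xt a) (xt b) = 0"
      using costate(1) t by blast+
  qed (use costate(2,3) in blast)+
qed

end
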